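(* Let $n,m\geq1$, $G=S_n^m$ and $H=S_n$ embedded diagonally in $G$. For $g=(\sigma_1,\dots,\sigma_m)\in G$: (1) $H_g=\mathrm{Aut}_{F_m^0}(Q_{(\sigma_i)})=C_{S_n}(\phi_{(\sigma_i)}(F_m^0))$ (identifying $H$ with $S_n$). (2) For $(\sigma_i),(\tau_i)\in S_n^m$ we have $(\sigma_i)\sim(\tau_i)$ if and only if $Q_{(\sigma_i)}\cong Q_{(\tau_i)}$ as $F_m^0$-sets.
   Context: For a finite group $G$, a subgroup $H$ and $x\in G$, set $H_x=\bigcap_{i\in\mathbb{Z}}x^iHx^{-i}$ and $S_x=H_x\cdot x\subseteq G$; define $x\sim y$ if there is $h\in H$ with $hS_xh^{-1}=S_y$. $F_m$ is the free group on $z_1,\dots,z_m$, $\upsilon:F_m\to\mathbb{Z}$ is the homomorphism with $\upsilon(z_i)=1$ for all $i$, and $F_m^0=\ker\upsilon$. For $(\sigma_i)\in S_n^m$, $\phi_{(\sigma_i)}:F_m\to S_n$ is the homomorphism with $z_i\mapsto\sigma_i$, and $Q_{(\sigma_i)}$ is the set $\{1,\dots,n\}$ with the $F_m$-action via $\phi_{(\sigma_i)}$ (and, by restriction, the $F_m^0$-action). $C_{S_n}(\cdot)$ denotes the centralizer. *)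

theory Defs
  imports "HOL-Algebra.Sym_Groups" "HOL-Algebra.Product_Groups"
begin

definition Gnm :: "nat \<Rightarrow> nat \<Rightarrow> (nat \<Rightarrow> nat \<Rightarrow> nat) monoid" where
  "Gnm n m = product_group {1..m} (\<lambda>_. sym_group n)"

definition diag :: "nat \<Rightarrow> (nat \<Rightarrow> nat) \<Rightarrow> (nat \<Rightarrow> nat \<Rightarrow> nat)" where
  "diag m \<sigma> = (\<lambda>i\<in>{1..m}. \<sigma>)"

definition Hdiag :: "nat \<Rightarrow> nat \<Rightarrow> (nat \<Rightarrow> nat \<Rightarrow> nat) set" where
  "Hdiag n m = diag m ` carrier (sym_group n)"

definition Hx :: "('a, 'b) monoid_scheme \<Rightarrow> 'a set \<Rightarrow> 'a \<Rightarrow> 'a set" where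
  "Hx G H x = (\<Inter>i::int. (x [^]\<^bsub>G\<^esub> i) <#\<^bsub>G\<^esub> H #>\<^bsub>G\<^esub> inv\<^bsub>G\<^esub> (x [^]\<^bsub>G\<^esub> i))"

definition Sx :: "('a, 'b) monoid_scheme \<Rightarrow> 'a set \<Rightarrow> 'a \<Rightarrow> 'a set" where
  "Sx G H x = Hx G H x #>\<^bsub>G\<^esub> x"

definition sim_rel :: "('a, 'b) monoid_scheme \<Rightarrow> 'a set \<Rightarrow> 'a \<Rightarrow> 'a \<Rightarrow> bool" where
  "sim_rel G H x y \<longleftrightarrow> (\<exists>h\<in>H. h <#\<^bsub>G\<^esub> Sx G H x #>\<^bsub>G\<^esub> inv\<^bsub>G\<^esub> h = Sx G H y)"

text \<open>A word in z_1..z_m: list of letters (i, True) = z_i, (i, False) = z_i^(-1).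
  Elements of F_m are represented by (not necessarily reduced) words over {1..m};
  images under homomorphisms and the induced actions do not depend on reduction.\<close>
type_synonym word = "(nat \<times> bool) list"

definition words :: "nat \<Rightarrow> word set" where
  "words m = {w. \<forall>(i, b) \<in> set w. i \<in> {1..m}}"

definition upsilon :: "word \<Rightarrow> int" where
  "upsilon w = (\<Sum>(i, b) \<leftarrow> w. if b then 1 else -1)"

definition Fm0 :: "nat \<Rightarrow> word set" where
  "Fm0 m = {w \<in> words m. upsilon w = 0}"

text \<open>phi_(sigma_i) : F_m \<rightarrow> S_n, z_i \<mapsto> sigma_i (sigma given as element of S_n^m)\<close>
definition phi :: "(nat \<Rightarrow> nat \<Rightarrow> nat) \<Rightarrow> word \<Rightarrow> (nat \<Rightarrow> nat)" where
  "phi \<sigma> w = foldr (\<lambda>(i, b) acc. (if b then \<sigma> i else inv' (\<sigma> i)) \<circ> acc) w id"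

text \<open>Automorphisms of the F_m^0-set Q_sigma = {1..n}\<close>
definition AutF0 :: "nat \<Rightarrow> nat \<Rightarrow> (nat \<Rightarrow> nat \<Rightarrow> nat) \<Rightarrow> (nat \<Rightarrow> nat) set" where
  "AutF0 n m \<sigma> = {f. f permutes {1..n} \<and>
      (\<forall>w\<in>Fm0 m. \<forall>x\<in>{1..n}. f (phi \<sigma> w x) = phi \<sigma> w (f x))}"

definition iso_F0 :: "nat \<Rightarrow> nat \<Rightarrow> (nat \<Rightarrow> nat \<Rightarrow> nat) \<Rightarrow> (nat \<Rightarrow> nat \<Rightarrow> nat) \<Rightarrow> bool" where
  "iso_F0 n m \<sigma> \<tau> \<longleftrightarrow> (\<exists>f. bij_betw f {1..n} {1..n} \<and>
      (\<forall>w\<in>Fm0 m. \<forall>x\<in>{1..n}. f (phi \<sigma> w x) = phi \<tau> w (f x)))"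

definition centralizer :: "('a, 'b) monoid_scheme \<Rightarrow> 'a set \<Rightarrow> 'a set" where
  "centralizer G A = {g \<in> carrier G. \<forall>a\<in>A. g \<otimes>\<^bsub>G\<^esub> a = a \<otimes>\<^bsub>G\<^esub> g}"

end

theory Submission
  imports Defs
begin

(*
  Write Z(s) for the centralizer of phi_s(F_m^0), the image of the balanced words under
  z_j |-> s_j.

  (1) diag(sigma) lies in g^i H g^-i iff the conjugates g_j^-i sigma g_j^i agree for all j.
  For sigma in Z(g) this follows from the balanced words z_j^i z_k^-i. Conversely, if T_i is
  the common value, then T_i g_j = g_j T_(i+1) for every j, hence
  T_i phi_g(w) = phi_g(w) T_(i + upsilon w), and T_0 = sigma commutes with phi_g(F_m^0).
  So H_g = diag(Z(g)), and Z(g) is the automorphism group of the F_m^0-set Q_g.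

  (2) Consequently S_g = {(c g_j)_j : c in Z(g)}, and conjugation by diag(f) carries S_g to
  S_(f g f^-1). Now S_s = S_t iff phi_s and phi_t agree on F_m^0. Replacing s_j by c s_j with
  c in Z(s) does not change phi_s on F_m^0: a nonempty balanced word splits as a u b v with
  u, v balanced and a, b letters of opposite signs, so that a u b is balanced too. Conversely
  t_j = d s_j with d = t_1 s_1^-1 in Z(s), as the balanced words z_1^-1 z_j and z_1^-1 w z_1
  show.
*)

declare sym_group_inv_equality [simp del]

section \<open>Balanced words\<close>

lemma words_Nil [simp]: "[] \<in> words m"
  by (simp add: words_def)

lemma words_Cons [simp]: "a # w \<in> words m \<longleftrightarrow> fst a \<in> {1..m} \<and> w \<in> words m"
  by (cases a) (auto simp: words_def)

lemma words_append [simp]: "u @ v \<in> words m \<longleftrightarrow> u \<in> words m \<and> v \<in> words m"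
  by (auto simp: words_def)

lemma upsilon_Nil [simp]: "upsilon [] = 0"
  by (simp add: upsilon_def)

lemma upsilon_Cons [simp]: "upsilon (a # w) = (if snd a then 1 else -1) + upsilon w"
  by (cases a) (simp add: upsilon_def)

lemma upsilon_append [simp]: "upsilon (u @ v) = upsilon u + upsilon v"
  by (induction u) auto

lemma upsilon_replicate: "upsilon (replicate k a) = int k * (if snd a then 1 else -1)"
  by (induction k) (auto simp: algebra_simps)

definition pow_word :: "nat \<Rightarrow> int \<Rightarrow> word" where
  "pow_word j i = (if 0 \<le> i then replicate (nat i) (j, True) else replicate (nat (- i)) (j, False))"

lemma upsilon_pow_word [simp]: "upsilon (pow_word j i) = i"
  by (simp add: pow_word_def upsilon_replicate)

lemma pow_word_in_words [simp]: "pow_word j i \<in> words m \<longleftrightarrow> j \<in> {1..m} \<or> i = 0"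
  by (auto simp: pow_word_def words_def)

lemma word_crosses_level:
  assumes d: "d = 1 \<or> d = -1" and "d * t \<le> 0" and "1 \<le> d * (t + upsilon w)"
  shows "\<exists>u b v. w = u @ b # v \<and> t + upsilon u = 0 \<and> (if snd b then 1 else -1) = d"
  using assms(2,3)
proof (induction w arbitrary: t)
  case Nil
  then show ?case by simp
next
  case (Cons a w)
  show ?case
  proof (cases "t = 0 \<and> (if snd a then 1 else -1) = d")
    case True
    then show ?thesis by (intro exI[of _ "[]"]) auto
  next
    case False
    let ?t = "t + (if snd a then 1 else -1)"
    have "d * ?t \<le> 0" using False d Cons.prems(1) by (auto split: if_splits)
    moreover have "1 \<le> d * (?t + upsilon w)" using Cons.prems(2) by (simp add: add.assoc)
    ultimately obtain u b v where "w = u @ b # v" "?t + upsilon u = 0" "(if snd b then 1 else -1) = d"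
      using Cons.IH by blast
    then show ?thesis by (intro exI[of _ "a # u"]) (auto simp: add.assoc)
  qed
qed

lemma balanced_word_split:
  assumes "w \<noteq> []" and "upsilon w = 0"
  obtains a u b v where "w = a # u @ b # v" "upsilon u = 0" "upsilon v = 0" "snd b = (\<not> snd a)"
proof -
  obtain a r where w: "w = a # r" using assms(1) by (cases w) auto
  define d :: int where "d = (if snd a then -1 else 1)"
  have "d = 1 \<or> d = -1" "d * 0 \<le> 0" by (simp_all add: d_def)
  moreover have "1 \<le> d * (0 + upsilon r)" using assms(2) w by (auto simp: d_def)
  ultimately obtain u b v where r: "r = u @ b # v" "upsilon u = 0" "(if snd b then 1 else -1) = d"
    using word_crosses_level[of d 0 r] by auto
  show thesis
  proof (rule that)
    show "w = a # u @ b # v" "upsilon u = 0" using w r by simp_all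
    show "upsilon v = 0" "snd b = (\<not> snd a)" using assms(2) w r by (auto simp: d_def split: if_splits)
  qed
qed

section \<open>Conjugation and centralizers\<close>

context group
begin

lemma inv_mult_cancel_left [simp]: "x \<in> carrier G \<Longrightarrow> y \<in> carrier G \<Longrightarrow> inv x \<otimes> (x \<otimes> y) = y"
  by (simp add: m_assoc [symmetric])

lemma mult_inv_cancel_left [simp]: "x \<in> carrier G \<Longrightarrow> y \<in> carrier G \<Longrightarrow> x \<otimes> (inv x \<otimes> y) = y"
  by (simp add: m_assoc [symmetric])

lemma commute_inv:
  assumes "c \<in> carrier G" "a \<in> carrier G" and "c \<otimes> a = a \<otimes> c"
  shows "inv c \<otimes> a = a \<otimes> inv c"
proof -
  have "inv c \<otimes> a = inv c \<otimes> (a \<otimes> c) \<otimes> inv c" using assms(1,2) by (simp add: m_assoc)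
  also have "\<dots> = a \<otimes> inv c" using assms by (simp flip: assms(3) add: m_assoc)
  finally show ?thesis .
qed

lemma conj_commute_iff:
  assumes "f \<in> carrier G" "x \<in> carrier G" "a \<in> carrier G"
  shows "(f \<otimes> x \<otimes> inv f) \<otimes> (f \<otimes> a \<otimes> inv f) = (f \<otimes> a \<otimes> inv f) \<otimes> (f \<otimes> x \<otimes> inv f)
    \<longleftrightarrow> x \<otimes> a = a \<otimes> x"
proof -
  have "(f \<otimes> y \<otimes> inv f) \<otimes> (f \<otimes> z \<otimes> inv f) = f \<otimes> (y \<otimes> z) \<otimes> inv f"
    if "y \<in> carrier G" "z \<in> carrier G" for y z
    using that assms(1) by (simp add: m_assoc)
  then show ?thesis using assms by simp
qed

lemma conj_coset_mem_iff:
  assumes "a \<in> carrier G" "y \<in> carrier G" "H \<subseteq> carrier G"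
  shows "y \<in> (a <# H) #> inv a \<longleftrightarrow> inv a \<otimes> y \<otimes> a \<in> H"
proof
  assume "y \<in> (a <# H) #> inv a"
  then obtain h where "h \<in> H" "y = a \<otimes> h \<otimes> inv a" by (auto simp: l_coset_def r_coset_def)
  then show "inv a \<otimes> y \<otimes> a \<in> H" using assms by (auto simp: m_assoc)
next
  assume "inv a \<otimes> y \<otimes> a \<in> H"
  moreover have "y = a \<otimes> (inv a \<otimes> y \<otimes> a) \<otimes> inv a" using assms by (simp add: m_assoc)
  ultimately show "y \<in> (a <# H) #> inv a" by (auto simp: l_coset_def r_coset_def)
qed

lemma centralizer_subgroup:
  assumes "A \<subseteq> carrier G"
  shows "subgroup (centralizer G A) G"
proof (rule subgroupI)
  show "centralizer G A \<subseteq> carrier G" "centralizer G A \<noteq> {}"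
    using assms by (auto simp: centralizer_def intro!: exI [of _ \<one>])
next
  fix c assume "c \<in> centralizer G A"
  then show "inv c \<in> centralizer G A" using assms by (auto simp: centralizer_def commute_inv)
next
  fix c d assume c: "c \<in> centralizer G A" and d: "d \<in> centralizer G A"
  have "c \<otimes> d \<otimes> a = a \<otimes> (c \<otimes> d)" if "a \<in> A" for a
    using c d that assms by (auto simp: centralizer_def m_assoc simp flip: m_assoc [of c])
  then show "c \<otimes> d \<in> centralizer G A" using c d by (auto simp: centralizer_def)
qed

lemma centralizer_conj:
  assumes f: "f \<in> carrier G" and A: "A \<subseteq> carrier G"
  shows "centralizer G ((\<lambda>a. f \<otimes> a \<otimes> inv f) ` A) = (\<lambda>c. f \<otimes> c \<otimes> inv f) ` centralizer G A"
proof (intro equalityI subsetI)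
  fix x assume x: "x \<in> centralizer G ((\<lambda>a. f \<otimes> a \<otimes> inv f) ` A)"
  define y where "y = inv f \<otimes> x \<otimes> f"
  have xc: "x \<in> carrier G" using x by (simp add: centralizer_def)
  then have y: "y \<in> carrier G" and xy: "x = f \<otimes> y \<otimes> inv f"
    using f by (simp_all add: y_def m_assoc)
  have "y \<otimes> a = a \<otimes> y" if "a \<in> A" for a
    using x that A conj_commute_iff [OF f y, of a] by (auto simp: centralizer_def xy)
  then have "y \<in> centralizer G A" using y by (simp add: centralizer_def)
  then show "x \<in> (\<lambda>c. f \<otimes> c \<otimes> inv f) ` centralizer G A" using xy by blast
next
  fix x assume "x \<in> (\<lambda>c. f \<otimes> c \<otimes> inv f) ` centralizer G A"
  then obtain c where c: "c \<in> centralizer G A" and x: "x = f \<otimes> c \<otimes> inv f" by blast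
  then show "x \<in> centralizer G ((\<lambda>a. f \<otimes> a \<otimes> inv f) ` A)"
    using f A conj_commute_iff [OF f] by (auto simp: centralizer_def)
qed

section \<open>Words evaluated in a group\<close>

definition eval_letter :: "(nat \<Rightarrow> 'a) \<Rightarrow> nat \<times> bool \<Rightarrow> 'a" where
  "eval_letter s a = (if snd a then s (fst a) else inv (s (fst a)))"

definition eval_word :: "(nat \<Rightarrow> 'a) \<Rightarrow> word \<Rightarrow> 'a" where
  "eval_word s w = foldr (\<lambda>a x. eval_letter s a \<otimes> x) w \<one>"

lemma eval_word_Nil [simp]: "eval_word s [] = \<one>"
  by (simp add: eval_word_def)

lemma eval_word_Cons [simp]: "eval_word s (a # w) = eval_letter s a \<otimes> eval_word s w"
  by (simp add: eval_word_def)

lemma eval_letter_closed [simp]: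
  "s \<in> {1..m} \<rightarrow> carrier G \<Longrightarrow> fst a \<in> {1..m} \<Longrightarrow> eval_letter s a \<in> carrier G"
  by (auto simp: eval_letter_def)

lemma eval_word_closed [simp]:
  "s \<in> {1..m} \<rightarrow> carrier G \<Longrightarrow> w \<in> words m \<Longrightarrow> eval_word s w \<in> carrier G"
  by (induction w) auto

lemma eval_word_append:
  "s \<in> {1..m} \<rightarrow> carrier G \<Longrightarrow> u \<in> words m \<Longrightarrow> v \<in> words m \<Longrightarrow>
    eval_word s (u @ v) = eval_word s u \<otimes> eval_word s v"
  by (induction u) (auto simp: m_assoc)

lemma eval_word_cong:
  "(\<And>j. j \<in> {1..m} \<Longrightarrow> s j = t j) \<Longrightarrow> w \<in> words m \<Longrightarrow> eval_word s w = eval_word t w"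
  by (induction w) (auto simp: eval_letter_def)

lemma eval_word_replicate:
  assumes "s \<in> {1..m} \<rightarrow> carrier G" and "fst a \<in> {1..m}"
  shows "eval_word s (replicate k a) = eval_letter s a [^] k"
proof (induction k)
  case (Suc k)
  have "eval_letter s a \<in> carrier G" using assms by (rule eval_letter_closed)
  then show ?case using Suc by (simp add: nat_pow_Suc2 [symmetric])
qed simp

lemma eval_pow_word:
  assumes "s \<in> {1..m} \<rightarrow> carrier G" and j: "j \<in> {1..m}"
  shows "eval_word s (pow_word j i) = s j [^] i"
proof -
  have sj: "s j \<in> carrier G" using assms by auto
  have "eval_word s (pow_word j i) = eval_letter s (j, 0 \<le> i) [^] nat \<bar>i\<bar>"
    using assms by (simp add: pow_word_def eval_word_replicate)
  also have "\<dots> = s j [^] i"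
  proof (cases "0 \<le> i")
    case True
    then show ?thesis by (simp add: eval_letter_def flip: int_pow_int)
  next
    case False
    then have "i = - int (nat \<bar>i\<bar>)" by simp
    then have "s j [^] i = inv (s j [^] nat \<bar>i\<bar>)" using sj int_pow_neg_int by metis
    also have "\<dots> = inv (s j) [^] nat \<bar>i\<bar>" using sj by (rule nat_pow_inv [symmetric])
    finally show ?thesis using False by (simp only: eval_letter_def) simp
  qed
  finally show ?thesis .
qed

lemma eval_word_conj:
  assumes "s \<in> {1..m} \<rightarrow> carrier G" and "f \<in> carrier G" and "w \<in> words m"
  shows "eval_word (\<lambda>j. f \<otimes> s j \<otimes> inv f) w = f \<otimes> eval_word s w \<otimes> inv f"
  using assms(3)
proof (induction w)
  case Nil
  then show ?case using assms(2) by simp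
next
  case (Cons a w)
  have "eval_letter (\<lambda>j. f \<otimes> s j \<otimes> inv f) a = f \<otimes> eval_letter s a \<otimes> inv f"
  proof -
    have "s (fst a) \<in> carrier G" using Cons.prems assms(1) by auto
    then show ?thesis
      using assms(2) by (simp add: eval_letter_def inv_mult_group m_assoc)
  qed
  moreover have "eval_word s w \<in> carrier G" using Cons.prems assms(1) by simp
  ultimately show ?case using Cons assms by (simp add: m_assoc)
qed

lemma eval_word_shift:
  assumes s: "s \<in> {1..m} \<rightarrow> carrier G" and T: "range T \<subseteq> carrier G"
    and shift: "\<And>i j. j \<in> {1..m} \<Longrightarrow> T i \<otimes> s j = s j \<otimes> T (i + 1)"
    and w: "w \<in> words m"
  shows "T i \<otimes> eval_word s w = eval_word s w \<otimes> T (i + upsilon w)"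
  using w
proof (induction w arbitrary: i)
  case Nil
  have "T i \<in> carrier G" using T by auto
  then show ?case by simp
next
  case (Cons a w)
  let ?d = "if snd a then 1 else - 1 :: int"
  have j: "fst a \<in> {1..m}" and w: "w \<in> words m" using Cons.prems by simp_all
  have sj: "s (fst a) \<in> carrier G" using s j by auto
  have TC: "T k \<in> carrier G" for k using T by auto
  have letter: "T i \<otimes> eval_letter s a = eval_letter s a \<otimes> T (i + ?d)"
  proof (cases "snd a")
    case True
    then show ?thesis using shift [OF j] by (simp add: eval_letter_def)
  next
    case False
    have "T (i - 1) \<otimes> s (fst a) = s (fst a) \<otimes> T i" using shift [OF j, of "i - 1"] by simp
    then have "inv (s (fst a)) \<otimes> (T (i - 1) \<otimes> s (fst a)) \<otimes> inv (s (fst a)) = T i \<otimes> inv (s (fst a))"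
      using sj TC by (simp add: m_assoc)
    then show ?thesis using False sj TC by (simp add: eval_letter_def m_assoc)
  qed
  have "T i \<otimes> eval_word s (a # w) = eval_letter s a \<otimes> (T (i + ?d) \<otimes> eval_word s w)"
    using letter s j w TC by (simp flip: m_assoc)
  also have "\<dots> = eval_word s (a # w) \<otimes> T (i + upsilon (a # w))"
    using Cons.IH [OF w] s j w TC by (simp add: m_assoc add.assoc)
  finally show ?case .
qed

lemma mem_word_centralizer_iff:
  assumes m: "1 \<le> m" and s: "s \<in> {1..m} \<rightarrow> carrier G" and \<sigma>: "\<sigma> \<in> carrier G"
  shows "\<sigma> \<in> centralizer G (eval_word s ` Fm0 m) \<longleftrightarrow>
    (\<forall>i::int. \<forall>j\<in>{1..m}. \<forall>k\<in>{1..m}.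
      inv (s j [^] i) \<otimes> \<sigma> \<otimes> s j [^] i = inv (s k [^] i) \<otimes> \<sigma> \<otimes> s k [^] i)"
proof (intro iffI ballI allI)
  fix i :: int and j k assume Z: "\<sigma> \<in> centralizer G (eval_word s ` Fm0 m)"
    and j: "j \<in> {1..m}" and k: "k \<in> {1..m}"
  let ?a = "s j [^] i" and ?b = "s k [^] i"
  have sk: "s k \<in> carrier G" using s k by auto
  have ab: "?a \<in> carrier G" "?b \<in> carrier G" using s j k by auto
  have "pow_word j i @ pow_word k (- i) \<in> Fm0 m" using j k by (simp add: Fm0_def)
  moreover have "eval_word s (pow_word j i @ pow_word k (- i)) = ?a \<otimes> inv ?b"
    using s j k sk by (simp add: eval_word_append eval_pow_word int_pow_neg)
  ultimately have "\<sigma> \<otimes> (?a \<otimes> inv ?b) = (?a \<otimes> inv ?b) \<otimes> \<sigma>"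
    using Z by (force simp: centralizer_def)
  then have "inv ?a \<otimes> (\<sigma> \<otimes> (?a \<otimes> inv ?b)) \<otimes> ?b = inv ?a \<otimes> ((?a \<otimes> inv ?b) \<otimes> \<sigma>) \<otimes> ?b"
    by simp
  then show "inv ?a \<otimes> \<sigma> \<otimes> ?a = inv ?b \<otimes> \<sigma> \<otimes> ?b" using ab \<sigma> by (simp add: m_assoc)
next
  assume agree: "\<forall>i::int. \<forall>j\<in>{1..m}. \<forall>k\<in>{1..m}.
    inv (s j [^] i) \<otimes> \<sigma> \<otimes> s j [^] i = inv (s k [^] i) \<otimes> \<sigma> \<otimes> s k [^] i"
  define T where "T i = inv (s 1 [^] i) \<otimes> \<sigma> \<otimes> s 1 [^] i" for i :: int
  have one: "1 \<in> {1..m}" using m by simp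
  have T_eq: "T i = inv (s j [^] i) \<otimes> \<sigma> \<otimes> s j [^] i" if "j \<in> {1..m}" for i j
    unfolding T_def using agree one that by blast
  have "s 1 \<in> carrier G" using s one by auto
  then have T: "range T \<subseteq> carrier G" using \<sigma> by (auto simp: T_def)
  have shift: "T i \<otimes> s j = s j \<otimes> T (i + 1)" if j: "j \<in> {1..m}" for i j
  proof -
    have sj: "s j \<in> carrier G" using s j by auto
    have "s j [^] (i + 1) = s j [^] i \<otimes> s j" using sj by (simp add: int_pow_mult)
    then show ?thesis using T_eq [OF j, of i] T_eq [OF j, of "i + 1"] sj \<sigma>
      by (simp add: inv_mult_group m_assoc)
  qed
  have "\<sigma> \<otimes> eval_word s w = eval_word s w \<otimes> \<sigma>" if "w \<in> Fm0 m" for w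
    using eval_word_shift [OF s T shift, of w 0] that \<sigma> by (simp add: Fm0_def T_def)
  then show "\<sigma> \<in> centralizer G (eval_word s ` Fm0 m)" using \<sigma> by (auto simp: centralizer_def)
qed

section \<open>Translates of the centralizer of the image of \<open>F\<^sub>m\<^sup>0\<close>\<close>

lemma eval_twisted_block:
  assumes s: "s \<in> {1..m} \<rightarrow> carrier G" and c: "c \<in> centralizer G (eval_word s ` Fm0 m)"
    and ab: "fst a \<in> {1..m}" "fst b \<in> {1..m}" "snd b = (\<not> snd a)" and u: "u \<in> Fm0 m"
  shows "eval_letter (\<lambda>j. c \<otimes> s j) a \<otimes> eval_word s u \<otimes> eval_letter (\<lambda>j. c \<otimes> s j) b
    = eval_letter s a \<otimes> eval_word s u \<otimes> eval_letter s b"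
proof -
  have cc: "c \<in> carrier G" using c by (simp add: centralizer_def)
  have sa: "s (fst a) \<in> carrier G" and sb: "s (fst b) \<in> carrier G" using s ab by auto
  have uw: "u \<in> words m" using u by (simp add: Fm0_def)
  have su: "eval_word s u \<in> carrier G" using s uw by simp
  show ?thesis
  proof (cases "snd a")
    case True
    let ?X = "eval_letter s a \<otimes> eval_word s u \<otimes> eval_letter s b"
    have "a # u @ [b] \<in> Fm0 m" using ab u True by (simp add: Fm0_def)
    moreover have "eval_word s (a # u @ [b]) = ?X" using s ab uw by (simp add: eval_word_append m_assoc)
    ultimately have "c \<otimes> ?X = ?X \<otimes> c" using c by (force simp: centralizer_def)
    moreover have "?X \<in> carrier G" using s ab uw by simp
    ultimately have "c \<otimes> ?X \<otimes> inv c = ?X" using cc by (simp add: m_assoc)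
    then show ?thesis
      using True ab(3) cc sa sb su by (simp add: eval_letter_def inv_mult_group m_assoc)
  next
    case False
    have "c \<otimes> eval_word s u = eval_word s u \<otimes> c" using c u by (force simp: centralizer_def)
    then have "inv c \<otimes> (eval_word s u \<otimes> (c \<otimes> s (fst b))) = inv c \<otimes> (c \<otimes> eval_word s u \<otimes> s (fst b))"
      using cc su sb by (simp add: m_assoc)
    then have "inv c \<otimes> (eval_word s u \<otimes> (c \<otimes> s (fst b))) = eval_word s u \<otimes> s (fst b)"
      using cc su sb by (simp add: m_assoc)
    then show ?thesis
      using False ab(3) cc sa sb su by (simp add: eval_letter_def inv_mult_group m_assoc)
  qed
qed

lemma eval_word_twist:
  assumes s: "s \<in> {1..m} \<rightarrow> carrier G" and c: "c \<in> centralizer G (eval_word s ` Fm0 m)"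
  shows "w \<in> Fm0 m \<Longrightarrow> eval_word (\<lambda>j. c \<otimes> s j) w = eval_word s w"
proof (induction "length w" arbitrary: w rule: less_induct)
  case less
  let ?t = "\<lambda>j. c \<otimes> s j"
  have "c \<in> carrier G" using c by (simp add: centralizer_def)
  then have t: "?t \<in> {1..m} \<rightarrow> carrier G" using s by auto
  show ?case
  proof (cases "w = []")
    case False
    have w: "w \<in> words m" "upsilon w = 0" using less.prems by (simp_all add: Fm0_def)
    obtain a u b v where w_eq: "w = a # u @ b # v" and uv: "upsilon u = 0" "upsilon v = 0"
      and ab: "snd b = (\<not> snd a)"
      using balanced_word_split [OF False w(2)] .
    have letters: "fst a \<in> {1..m}" "fst b \<in> {1..m}" and uv_F0: "u \<in> Fm0 m" "v \<in> Fm0 m"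
      using w(1) uv by (auto simp: w_eq Fm0_def)
    have "eval_word ?t w = eval_letter ?t a \<otimes> eval_word ?t u \<otimes> eval_letter ?t b \<otimes> eval_word ?t v"
      using t letters uv_F0 by (simp add: w_eq Fm0_def eval_word_append m_assoc)
    also have "\<dots> = eval_letter ?t a \<otimes> eval_word s u \<otimes> eval_letter ?t b \<otimes> eval_word s v"
      using less.hyps uv_F0 by (simp add: w_eq)
    also have "\<dots> = eval_word s w"
      using eval_twisted_block [OF s c letters ab uv_F0(1)] s letters uv_F0
      by (simp add: w_eq Fm0_def eval_word_append m_assoc)
    finally show ?thesis .
  qed simp
qed

lemma eval_word_agree_imp_twist:
  assumes m: "1 \<le> m" and s: "s \<in> {1..m} \<rightarrow> carrier G" and t: "t \<in> {1..m} \<rightarrow> carrier G"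
    and agree: "\<And>w. w \<in> Fm0 m \<Longrightarrow> eval_word s w = eval_word t w"
  obtains d where "d \<in> centralizer G (eval_word s ` Fm0 m)" and "\<And>j. j \<in> {1..m} \<Longrightarrow> t j = d \<otimes> s j"
proof
  have one: "1 \<in> {1..m}" using m by simp
  have s1: "s 1 \<in> carrier G" and t1: "t 1 \<in> carrier G" using s t one by auto
  define d where "d = t 1 \<otimes> inv (s 1)"
  have dc: "d \<in> carrier G" using s1 t1 by (simp add: d_def)
  show "t j = d \<otimes> s j" if j: "j \<in> {1..m}" for j
  proof -
    have "[(1, False), (j, True)] \<in> Fm0 m" using one j by (simp add: Fm0_def)
    then have "inv (s 1) \<otimes> s j = inv (t 1) \<otimes> t j"
      using agree s t j s1 t1 by (force simp: eval_letter_def)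
    then have "t 1 \<otimes> (inv (s 1) \<otimes> s j) = t 1 \<otimes> (inv (t 1) \<otimes> t j)" by simp
    then show ?thesis using s t j t1 s1 by (force simp: d_def m_assoc)
  qed
  have "d \<otimes> eval_word s w = eval_word s w \<otimes> d" if w: "w \<in> Fm0 m" for w
  proof -
    have ww: "w \<in> words m" using w by (simp add: Fm0_def)
    let ?x = "eval_word s w"
    have xc: "?x \<in> carrier G" using s ww by simp
    have "(1, False) # w @ [(1, True)] \<in> Fm0 m" using one w by (simp add: Fm0_def)
    then have "inv (s 1) \<otimes> (?x \<otimes> s 1) = inv (t 1) \<otimes> (?x \<otimes> t 1)"
      using agree [of "(1, False) # w @ [(1, True)]"] agree [OF w] s t ww one s1 t1
      by (simp add: eval_word_append eval_letter_def)
    then have "t 1 \<otimes> (inv (s 1) \<otimes> (?x \<otimes> s 1)) \<otimes> inv (s 1) = t 1 \<otimes> (inv (t 1) \<otimes> (?x \<otimes> t 1)) \<otimes> inv (s 1)"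
      by simp
    then show ?thesis using s1 t1 xc by (simp add: d_def m_assoc)
  qed
  then show "d \<in> centralizer G (eval_word s ` Fm0 m)" using dc by (auto simp: centralizer_def)
qed

(* The set S_s of the paper, read in S_n^m (see Sx_Gnm). *)
definition centralizer_translates :: "nat \<Rightarrow> (nat \<Rightarrow> 'a) \<Rightarrow> (nat \<Rightarrow> 'a) set" where
  "centralizer_translates m s = (\<lambda>c. \<lambda>j\<in>{1..m}. c \<otimes> s j) ` centralizer G (eval_word s ` Fm0 m)"

lemma centralizer_translates_cong:
  assumes "\<And>j. j \<in> {1..m} \<Longrightarrow> s j = t j"
  shows "centralizer_translates m s = centralizer_translates m t"
proof -
  have "eval_word s ` Fm0 m = eval_word t ` Fm0 m"
    using eval_word_cong [of m s t] assms by (intro image_cong refl) (simp add: Fm0_def)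
  then show ?thesis using assms by (simp add: centralizer_translates_def cong: restrict_cong)
qed

lemma centralizer_translates_twist:
  assumes s: "s \<in> {1..m} \<rightarrow> carrier G" and d: "d \<in> centralizer G (eval_word s ` Fm0 m)"
  shows "centralizer_translates m (\<lambda>j. d \<otimes> s j) = centralizer_translates m s"
proof -
  have same_centralizer:
    "centralizer G (eval_word (\<lambda>j. d \<otimes> s j) ` Fm0 m) = centralizer G (eval_word s ` Fm0 m)"
    using eval_word_twist [OF s d] by (simp cong: image_cong)
  have "subgroup (centralizer G (eval_word s ` Fm0 m)) G"
    by (rule centralizer_subgroup) (use s in \<open>auto simp: Fm0_def\<close>)
  then have "centralizer G (eval_word s ` Fm0 m) #> d = centralizer G (eval_word s ` Fm0 m)"
    using d is_group by (simp add: subgroup.rcos_const)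
  then have translate:
    "(\<lambda>c. c \<otimes> d) ` centralizer G (eval_word s ` Fm0 m) = centralizer G (eval_word s ` Fm0 m)"
    by (simp add: r_coset_def UNION_singleton_eq_range)
  have "centralizer_translates m (\<lambda>j. d \<otimes> s j)
      = (\<lambda>c. \<lambda>j\<in>{1..m}. c \<otimes> s j) ` ((\<lambda>c. c \<otimes> d) ` centralizer G (eval_word s ` Fm0 m))"
    unfolding centralizer_translates_def same_centralizer image_image
  proof (intro image_cong refl restrict_ext)
    fix c j assume "c \<in> centralizer G (eval_word s ` Fm0 m)" and j: "j \<in> {1..m}"
    moreover have "s j \<in> carrier G" using s j by auto
    ultimately show "c \<otimes> (d \<otimes> s j) = c \<otimes> d \<otimes> s j"
      using d by (simp add: m_assoc centralizer_def)
  qed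
  then show ?thesis by (simp add: translate centralizer_translates_def)
qed

lemma centralizer_translates_eq_iff:
  assumes m: "1 \<le> m" and s: "s \<in> {1..m} \<rightarrow> carrier G" and t: "t \<in> {1..m} \<rightarrow> carrier G"
  shows "centralizer_translates m s = centralizer_translates m t \<longleftrightarrow>
    (\<forall>w\<in>Fm0 m. eval_word s w = eval_word t w)"
proof
  assume eq: "centralizer_translates m s = centralizer_translates m t"
  have "eval_word t w \<in> carrier G" if "w \<in> Fm0 m" for w
    using t that by (simp add: Fm0_def)
  then have "\<one> \<in> centralizer G (eval_word t ` Fm0 m)" by (auto simp: centralizer_def)
  then have "(\<lambda>j\<in>{1..m}. \<one> \<otimes> t j) \<in> centralizer_translates m t"
    unfolding centralizer_translates_def by (rule imageI)
  then have "(\<lambda>j\<in>{1..m}. \<one> \<otimes> t j) \<in> centralizer_translates m s" by (simp only: eq)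
  then obtain c where c: "c \<in> centralizer G (eval_word s ` Fm0 m)"
    and c_eq: "(\<lambda>j\<in>{1..m}. c \<otimes> s j) = (\<lambda>j\<in>{1..m}. \<one> \<otimes> t j)"
    unfolding centralizer_translates_def by (rule imageE) simp
  have "t j = c \<otimes> s j" if j: "j \<in> {1..m}" for j
  proof -
    have "t j \<in> carrier G" using t j by auto
    then show ?thesis using fun_cong [OF c_eq, of j] j by simp
  qed
  then show "\<forall>w\<in>Fm0 m. eval_word s w = eval_word t w"
    using eval_word_twist [OF s c] eval_word_cong [of m t] by (simp add: Fm0_def)
next
  assume "\<forall>w\<in>Fm0 m. eval_word s w = eval_word t w"
  then obtain d where d: "d \<in> centralizer G (eval_word s ` Fm0 m)"
    and t_eq: "\<And>j. j \<in> {1..m} \<Longrightarrow> t j = d \<otimes> s j"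
    using eval_word_agree_imp_twist [OF m s t] by blast
  have "centralizer_translates m t = centralizer_translates m (\<lambda>j. d \<otimes> s j)"
    using t_eq by (rule centralizer_translates_cong)
  also have "\<dots> = centralizer_translates m s" using s d by (rule centralizer_translates_twist)
  finally show "centralizer_translates m s = centralizer_translates m t" ..
qed

lemma centralizer_translates_conj:
  assumes s: "s \<in> {1..m} \<rightarrow> carrier G" and f: "f \<in> carrier G"
  shows "(\<lambda>x. \<lambda>j\<in>{1..m}. f \<otimes> x j \<otimes> inv f) ` centralizer_translates m s
    = centralizer_translates m (\<lambda>j. f \<otimes> s j \<otimes> inv f)"
proof -
  have "eval_word (\<lambda>j. f \<otimes> s j \<otimes> inv f) ` Fm0 m = (\<lambda>a. f \<otimes> a \<otimes> inv f) ` eval_word s ` Fm0 m"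
    unfolding image_image by (intro image_cong refl) (simp add: eval_word_conj [OF s f] Fm0_def)
  moreover have "eval_word s ` Fm0 m \<subseteq> carrier G" using s by (auto simp: Fm0_def)
  ultimately have centralizer_eq: "centralizer G (eval_word (\<lambda>j. f \<otimes> s j \<otimes> inv f) ` Fm0 m)
      = (\<lambda>c. f \<otimes> c \<otimes> inv f) ` centralizer G (eval_word s ` Fm0 m)"
    using centralizer_conj [OF f] by simp
  show ?thesis
    unfolding centralizer_translates_def centralizer_eq image_image
  proof (intro image_cong refl restrict_ext)
    fix c j assume "c \<in> centralizer G (eval_word s ` Fm0 m)" and j: "j \<in> {1..m}"
    moreover have "s j \<in> carrier G" using s j by auto
    ultimately show "f \<otimes> (\<lambda>j\<in>{1..m}. c \<otimes> s j) j \<otimes> inv f = f \<otimes> c \<otimes> inv f \<otimes> (f \<otimes> s j \<otimes> inv f)"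
      using f by (simp add: centralizer_def m_assoc)
  qed
qed

lemma conj_centralizer_translates_eq_iff:
  assumes m: "1 \<le> m" and s: "s \<in> {1..m} \<rightarrow> carrier G" and t: "t \<in> {1..m} \<rightarrow> carrier G"
    and f: "f \<in> carrier G"
  shows "(\<lambda>x. \<lambda>j\<in>{1..m}. f \<otimes> x j \<otimes> inv f) ` centralizer_translates m s = centralizer_translates m t
    \<longleftrightarrow> (\<forall>w\<in>Fm0 m. f \<otimes> eval_word s w = eval_word t w \<otimes> f)"
proof -
  have "(\<lambda>j. f \<otimes> s j \<otimes> inv f) \<in> {1..m} \<rightarrow> carrier G" using s f by auto
  moreover have "f \<otimes> eval_word s w \<otimes> inv f = eval_word t w \<longleftrightarrow> f \<otimes> eval_word s w = eval_word t w \<otimes> f"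
    if "w \<in> Fm0 m" for w
    using that s t f inv_solve_right' [of "eval_word t w" "f \<otimes> eval_word s w" f] by (simp add: Fm0_def)
  ultimately show ?thesis
    using centralizer_translates_conj [OF s f] centralizer_translates_eq_iff [OF m _ t] eval_word_conj [OF s f]
    by (simp add: Fm0_def)
qed

end

section \<open>\<open>F\<^sub>m\<^sup>0\<close>-sets of permutations\<close>

interpretation SG: group "sym_group n" for n
  by (rule sym_group_is_group)

lemma phi_eq_eval_word:
  assumes "s \<in> {1..m} \<rightarrow> carrier (sym_group n)" and "w \<in> words m"
  shows "phi s w = SG.eval_word n s w"
  using assms(2)
proof (induction w)
  case Nil
  then show ?case by (simp add: phi_def sym_group_one)
next
  case (Cons a w)
  obtain j b where a: "a = (j, b)" by (cases a)
  have "s j \<in> carrier (sym_group n)" using assms(1) Cons.prems a by auto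
  then show ?case
    using Cons a by (simp add: phi_def SG.eval_letter_def sym_group_mult sym_group_inv_equality)
qed

lemma phi_image_Fm0:
  "s \<in> {1..m} \<rightarrow> carrier (sym_group n) \<Longrightarrow> phi s ` Fm0 m = SG.eval_word n s ` Fm0 m"
  by (intro image_cong refl) (simp add: phi_eq_eval_word Fm0_def)

lemma phi_permutes:
  "s \<in> {1..m} \<rightarrow> carrier (sym_group n) \<Longrightarrow> w \<in> words m \<Longrightarrow> phi s w permutes {1..n}"
  using SG.eval_word_closed [of s m n w] by (simp add: phi_eq_eval_word sym_group_carrier)

lemma permutes_intertwines_iff:
  assumes "f permutes S" "p permutes S" "q permutes S"
  shows "(\<forall>x\<in>S. f (p x) = q (f x)) \<longleftrightarrow> f \<circ> p = q \<circ> f"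
proof
  assume on_S: "\<forall>x\<in>S. f (p x) = q (f x)"
  show "f \<circ> p = q \<circ> f"
  proof
    fix x show "(f \<circ> p) x = (q \<circ> f) x"
      using on_S assms by (cases "x \<in> S") (simp_all add: permutes_not_in)
  qed
qed (metis comp_apply)

lemma AutF0_eq_centralizer:
  assumes "s \<in> {1..m} \<rightarrow> carrier (sym_group n)"
  shows "AutF0 n m s = centralizer (sym_group n) (phi s ` Fm0 m)"
proof -
  have "(\<forall>x\<in>{1..n}. f (phi s w x) = phi s w (f x)) \<longleftrightarrow> f \<circ> phi s w = phi s w \<circ> f"
    if "f permutes {1..n}" "w \<in> Fm0 m" for f w
    using permutes_intertwines_iff [OF that(1)] phi_permutes [OF assms] that(2) by (simp add: Fm0_def)
  then show ?thesis by (auto simp: AutF0_def centralizer_def sym_group_carrier sym_group_mult)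
qed

lemma iso_F0_iff:
  assumes \<sigma>: "\<sigma> \<in> {1..m} \<rightarrow> carrier (sym_group n)" and \<tau>: "\<tau> \<in> {1..m} \<rightarrow> carrier (sym_group n)"
  shows "iso_F0 n m \<sigma> \<tau> \<longleftrightarrow> (\<exists>f. f permutes {1..n} \<and> (\<forall>w\<in>Fm0 m. f \<circ> phi \<sigma> w = phi \<tau> w \<circ> f))"
proof
  assume "iso_F0 n m \<sigma> \<tau>"
  then obtain f where f: "bij_betw f {1..n} {1..n}"
    and intertwines: "\<forall>w\<in>Fm0 m. \<forall>x\<in>{1..n}. f (phi \<sigma> w x) = phi \<tau> w (f x)"
    by (auto simp: iso_F0_def)
  have perm: "restrict_id f {1..n} permutes {1..n}" using f by (rule permutes_restrict_id)
  have "\<forall>x\<in>{1..n}. restrict_id f {1..n} (phi \<sigma> w x) = phi \<tau> w (restrict_id f {1..n} x)"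
    if w: "w \<in> Fm0 m" for w
  proof
    fix x assume x: "x \<in> {1..n}"
    have "phi \<sigma> w permutes {1..n}" using phi_permutes [OF \<sigma>] w by (simp add: Fm0_def)
    then have "phi \<sigma> w x \<in> {1..n}" using x by (rule permutes_in_image [THEN iffD2])
    then show "restrict_id f {1..n} (phi \<sigma> w x) = phi \<tau> w (restrict_id f {1..n} x)"
      using intertwines w x by simp
  qed
  then have "\<forall>w\<in>Fm0 m. restrict_id f {1..n} \<circ> phi \<sigma> w = phi \<tau> w \<circ> restrict_id f {1..n}"
    using permutes_intertwines_iff [OF perm] phi_permutes [OF \<sigma>] phi_permutes [OF \<tau>]
    by (simp add: Fm0_def)
  then show "\<exists>f. f permutes {1..n} \<and> (\<forall>w\<in>Fm0 m. f \<circ> phi \<sigma> w = phi \<tau> w \<circ> f)"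
    using perm by blast
next
  assume "\<exists>f. f permutes {1..n} \<and> (\<forall>w\<in>Fm0 m. f \<circ> phi \<sigma> w = phi \<tau> w \<circ> f)"
  then show "iso_F0 n m \<sigma> \<tau>"
    unfolding iso_F0_def by (metis comp_apply permutes_imp_bij)
qed

section \<open>The diagonal subgroup of \<open>S\<^sub>n\<^sup>m\<close>\<close>

lemma int_pow_product_group:
  assumes G: "\<And>i. i \<in> I \<Longrightarrow> group (G i)" and x: "x \<in> carrier (product_group I G)"
  shows "x [^]\<^bsub>product_group I G\<^esub> (k::int) = (\<lambda>i\<in>I. x i [^]\<^bsub>G i\<^esub> k)"
proof
  fix i
  have P: "group (product_group I G)" using G by simp
  then have "x [^]\<^bsub>product_group I G\<^esub> k \<in> carrier (product_group I G)"
    using x by (rule group.int_pow_closed)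
  moreover have "(x [^]\<^bsub>product_group I G\<^esub> k) i = x i [^]\<^bsub>G i\<^esub> k" if i: "i \<in> I"
  proof -
    have "(\<lambda>y. y i) \<in> hom (product_group I G) (G i)"
      using i by (intro homI) (auto simp: PiE_iff)
    from hom_int_pow [OF this x P G [OF i]] show ?thesis by simp
  qed
  ultimately show "(x [^]\<^bsub>product_group I G\<^esub> k) i = (\<lambda>i\<in>I. x i [^]\<^bsub>G i\<^esub> k) i"
    by (cases "i \<in> I") (auto simp: PiE_def extensional_def)
qed

lemma Gnm_group: "group (Gnm n m)"
  by (simp add: Gnm_def sym_group_is_group)

lemma Gnm_carrier_Pi: "g \<in> carrier (Gnm n m) \<Longrightarrow> g \<in> {1..m} \<rightarrow> carrier (sym_group n)"
  by (auto simp: Gnm_def)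

lemma diag_in_Gnm: "\<sigma> \<in> carrier (sym_group n) \<Longrightarrow> diag m \<sigma> \<in> carrier (Gnm n m)"
  by (simp add: diag_def Gnm_def)

lemma Hdiag_subset_Gnm: "Hdiag n m \<subseteq> carrier (Gnm n m)"
  by (auto simp: Hdiag_def diag_in_Gnm)

lemma diag_inj:
  assumes "1 \<le> m" and "diag m \<sigma> = diag m \<tau>"
  shows "\<sigma> = \<tau>"
  using fun_cong [OF assms(2), of 1] assms(1) by (simp add: diag_def)

lemma restrict_in_Hdiag_iff:
  assumes m: "1 \<le> m" and F: "F \<in> {1..m} \<rightarrow> carrier (sym_group n)"
  shows "(\<lambda>j\<in>{1..m}. F j) \<in> Hdiag n m \<longleftrightarrow> (\<forall>j\<in>{1..m}. \<forall>k\<in>{1..m}. F j = F k)"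
proof
  assume "(\<lambda>j\<in>{1..m}. F j) \<in> Hdiag n m"
  then obtain \<rho> where eq: "(\<lambda>j\<in>{1..m}. F j) = (\<lambda>j\<in>{1..m}. \<rho>)" by (auto simp: Hdiag_def diag_def)
  have "F j = \<rho>" if "j \<in> {1..m}" for j using fun_cong [OF eq, of j] that by simp
  then show "\<forall>j\<in>{1..m}. \<forall>k\<in>{1..m}. F j = F k" by simp
next
  assume const: "\<forall>j\<in>{1..m}. \<forall>k\<in>{1..m}. F j = F k"
  have one: "1 \<in> {1..m}" using m by simp
  have "(\<lambda>j\<in>{1..m}. F j) = diag m (F 1)"
    unfolding diag_def using const one by (intro restrict_ext) blast
  moreover have "F 1 \<in> carrier (sym_group n)" using F one by auto
  ultimately show "(\<lambda>j\<in>{1..m}. F j) \<in> Hdiag n m" by (simp add: Hdiag_def)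
qed

lemma diag_in_conj_Hdiag_iff:
  assumes m: "1 \<le> m" and g: "g \<in> carrier (Gnm n m)" and \<sigma>: "\<sigma> \<in> carrier (sym_group n)"
  shows "diag m \<sigma> \<in> (g [^]\<^bsub>Gnm n m\<^esub> (i::int) <#\<^bsub>Gnm n m\<^esub> Hdiag n m) #>\<^bsub>Gnm n m\<^esub> inv\<^bsub>Gnm n m\<^esub> (g [^]\<^bsub>Gnm n m\<^esub> i)
    \<longleftrightarrow> (\<forall>j\<in>{1..m}. \<forall>k\<in>{1..m}.
      inv\<^bsub>sym_group n\<^esub> (g j [^]\<^bsub>sym_group n\<^esub> i) \<otimes>\<^bsub>sym_group n\<^esub> \<sigma> \<otimes>\<^bsub>sym_group n\<^esub> g j [^]\<^bsub>sym_group n\<^esub> i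
      = inv\<^bsub>sym_group n\<^esub> (g k [^]\<^bsub>sym_group n\<^esub> i) \<otimes>\<^bsub>sym_group n\<^esub> \<sigma> \<otimes>\<^bsub>sym_group n\<^esub> g k [^]\<^bsub>sym_group n\<^esub> i)"
proof -
  interpret Gnm: group "Gnm n m" by (rule Gnm_group)
  let ?a = "g [^]\<^bsub>Gnm n m\<^esub> i"
  have g_Pi: "g \<in> {1..m} \<rightarrow> carrier (sym_group n)" using g by (rule Gnm_carrier_Pi)
  have a: "?a = (\<lambda>j\<in>{1..m}. g j [^]\<^bsub>sym_group n\<^esub> i)"
    using g int_pow_product_group [of "{1..m}" "\<lambda>_. sym_group n"] by (simp add: Gnm_def sym_group_is_group)
  have "?a \<in> carrier (Gnm n m)" using g by simp
  then have inv_a: "inv\<^bsub>Gnm n m\<^esub> ?a = (\<lambda>j\<in>{1..m}. inv\<^bsub>sym_group n\<^esub> (g j [^]\<^bsub>sym_group n\<^esub> i))"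
    unfolding a by (simp add: Gnm_def sym_group_is_group cong: restrict_cong)
  have "inv\<^bsub>Gnm n m\<^esub> ?a \<otimes>\<^bsub>Gnm n m\<^esub> diag m \<sigma> \<otimes>\<^bsub>Gnm n m\<^esub> ?a
      = (\<lambda>j\<in>{1..m}. inv\<^bsub>sym_group n\<^esub> (g j [^]\<^bsub>sym_group n\<^esub> i) \<otimes>\<^bsub>sym_group n\<^esub> \<sigma> \<otimes>\<^bsub>sym_group n\<^esub> g j [^]\<^bsub>sym_group n\<^esub> i)"
    unfolding inv_a by (subst a) (simp add: Gnm_def diag_def cong: restrict_cong)
  moreover have "(\<lambda>j. inv\<^bsub>sym_group n\<^esub> (g j [^]\<^bsub>sym_group n\<^esub> i) \<otimes>\<^bsub>sym_group n\<^esub> \<sigma> \<otimes>\<^bsub>sym_group n\<^esub> g j [^]\<^bsub>sym_group n\<^esub> i)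
      \<in> {1..m} \<rightarrow> carrier (sym_group n)"
  proof
    fix j assume "j \<in> {1..m}"
    then have "g j \<in> carrier (sym_group n)" using g_Pi by blast
    then show "inv\<^bsub>sym_group n\<^esub> (g j [^]\<^bsub>sym_group n\<^esub> i) \<otimes>\<^bsub>sym_group n\<^esub> \<sigma> \<otimes>\<^bsub>sym_group n\<^esub> g j [^]\<^bsub>sym_group n\<^esub> i
      \<in> carrier (sym_group n)" using \<sigma> by simp
  qed
  ultimately show ?thesis
    using Gnm.conj_coset_mem_iff [OF _ diag_in_Gnm [OF \<sigma>] Hdiag_subset_Gnm] g restrict_in_Hdiag_iff [OF m]
    by simp
qed

lemma Hx_Gnm:
  assumes m: "1 \<le> m" and g: "g \<in> carrier (Gnm n m)"
  shows "Hx (Gnm n m) (Hdiag n m) g = diag m ` centralizer (sym_group n) (phi g ` Fm0 m)"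
proof -
  interpret Gnm: group "Gnm n m" by (rule Gnm_group)
  have g_Pi: "g \<in> {1..m} \<rightarrow> carrier (sym_group n)" using g by (rule Gnm_carrier_Pi)
  have mem: "diag m \<sigma> \<in> Hx (Gnm n m) (Hdiag n m) g \<longleftrightarrow> \<sigma> \<in> centralizer (sym_group n) (phi g ` Fm0 m)"
    if \<sigma>: "\<sigma> \<in> carrier (sym_group n)" for \<sigma>
    using diag_in_conj_Hdiag_iff [OF m g \<sigma>] SG.mem_word_centralizer_iff [OF m g_Pi \<sigma>]
    by (simp add: Hx_def phi_image_Fm0 [OF g_Pi])
  have "Hx (Gnm n m) (Hdiag n m) g \<subseteq> (g [^]\<^bsub>Gnm n m\<^esub> (0::int) <#\<^bsub>Gnm n m\<^esub> Hdiag n m)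
      #>\<^bsub>Gnm n m\<^esub> inv\<^bsub>Gnm n m\<^esub> (g [^]\<^bsub>Gnm n m\<^esub> (0::int))"
    unfolding Hx_def by blast
  also have "\<dots> = Hdiag n m" using Hdiag_subset_Gnm by (simp add: Gnm.lcos_mult_one)
  finally have "Hx (Gnm n m) (Hdiag n m) g \<subseteq> diag m ` carrier (sym_group n)" by (simp add: Hdiag_def)
  then show ?thesis using mem by (auto simp: centralizer_def)
qed

lemma Sx_Gnm:
  assumes m: "1 \<le> m" and g: "g \<in> carrier (Gnm n m)"
  shows "Sx (Gnm n m) (Hdiag n m) g = SG.centralizer_translates n m g"
proof -
  have g_Pi: "g \<in> {1..m} \<rightarrow> carrier (sym_group n)" using g by (rule Gnm_carrier_Pi)
  have "Sx (Gnm n m) (Hdiag n m) g = (\<lambda>c. diag m c \<otimes>\<^bsub>Gnm n m\<^esub> g) ` centralizer (sym_group n) (phi g ` Fm0 m)"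
    by (auto simp: Sx_def Hx_Gnm [OF m g] r_coset_def)
  also have "\<dots> = SG.centralizer_translates n m g"
    unfolding SG.centralizer_translates_def phi_image_Fm0 [OF g_Pi]
    by (intro image_cong refl) (simp add: Gnm_def diag_def cong: restrict_cong)
  finally show ?thesis .
qed

lemma conj_by_diag_Gnm:
  assumes f: "f \<in> carrier (sym_group n)"
  shows "diag m f <#\<^bsub>Gnm n m\<^esub> X #>\<^bsub>Gnm n m\<^esub> inv\<^bsub>Gnm n m\<^esub> (diag m f)
    = (\<lambda>x. \<lambda>j\<in>{1..m}. f \<otimes>\<^bsub>sym_group n\<^esub> x j \<otimes>\<^bsub>sym_group n\<^esub> inv\<^bsub>sym_group n\<^esub> f) ` X"
proof -
  have "inv\<^bsub>Gnm n m\<^esub> (diag m f) = (\<lambda>j\<in>{1..m}. inv\<^bsub>sym_group n\<^esub> f)"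
    using diag_in_Gnm [OF f, of m] by (simp add: Gnm_def diag_def sym_group_is_group cong: restrict_cong)
  then show ?thesis
    by (auto simp: l_coset_def r_coset_def Gnm_def diag_def image_iff cong: restrict_cong)
qed

lemma sim_rel_Gnm_iff:
  assumes m: "1 \<le> m" and \<sigma>: "\<sigma> \<in> carrier (Gnm n m)" and \<tau>: "\<tau> \<in> carrier (Gnm n m)"
  shows "sim_rel (Gnm n m) (Hdiag n m) \<sigma> \<tau> \<longleftrightarrow>
    (\<exists>f. f permutes {1..n} \<and> (\<forall>w\<in>Fm0 m. f \<circ> phi \<sigma> w = phi \<tau> w \<circ> f))"
proof -
  have \<sigma>_Pi: "\<sigma> \<in> {1..m} \<rightarrow> carrier (sym_group n)" using \<sigma> by (rule Gnm_carrier_Pi)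
  have \<tau>_Pi: "\<tau> \<in> {1..m} \<rightarrow> carrier (sym_group n)" using \<tau> by (rule Gnm_carrier_Pi)
  have "sim_rel (Gnm n m) (Hdiag n m) \<sigma> \<tau> \<longleftrightarrow> (\<exists>f\<in>carrier (sym_group n).
      (\<lambda>x. \<lambda>j\<in>{1..m}. f \<otimes>\<^bsub>sym_group n\<^esub> x j \<otimes>\<^bsub>sym_group n\<^esub> inv\<^bsub>sym_group n\<^esub> f)
        ` SG.centralizer_translates n m \<sigma> = SG.centralizer_translates n m \<tau>)"
    unfolding sim_rel_def Sx_Gnm [OF m \<sigma>] Sx_Gnm [OF m \<tau>] by (simp add: Hdiag_def conj_by_diag_Gnm)
  also have "\<dots> \<longleftrightarrow> (\<exists>f\<in>carrier (sym_group n). \<forall>w\<in>Fm0 m.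
      f \<otimes>\<^bsub>sym_group n\<^esub> SG.eval_word n \<sigma> w = SG.eval_word n \<tau> w \<otimes>\<^bsub>sym_group n\<^esub> f)"
    using SG.conj_centralizer_translates_eq_iff [OF m \<sigma>_Pi \<tau>_Pi] by simp
  also have "\<dots> \<longleftrightarrow> (\<exists>f. f permutes {1..n} \<and> (\<forall>w\<in>Fm0 m. f \<circ> phi \<sigma> w = phi \<tau> w \<circ> f))"
    by (simp add: Bex_def sym_group_carrier sym_group_mult phi_eq_eval_word [OF \<sigma>_Pi] phi_eq_eval_word [OF \<tau>_Pi] Fm0_def)
  finally show ?thesis .
qed

theorem lemma5p2:
  fixes n m :: nat
  assumes "n \<ge> 1" and "m \<ge> 1"
  shows "(\<forall>g \<in> carrier (Gnm n m).
            {\<sigma> \<in> carrier (sym_group n). diag m \<sigma> \<in> Hx (Gnm n m) (Hdiag n m) g}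
              = AutF0 n m g
          \<and> AutF0 n m g = centralizer (sym_group n) (phi g ` Fm0 m))
       \<and> (\<forall>\<sigma> \<in> carrier (Gnm n m). \<forall>\<tau> \<in> carrier (Gnm n m).
            sim_rel (Gnm n m) (Hdiag n m) \<sigma> \<tau> \<longleftrightarrow> iso_F0 n m \<sigma> \<tau>)"
proof (intro conjI ballI)
  fix g assume g: "g \<in> carrier (Gnm n m)"
  then have g_Pi: "g \<in> {1..m} \<rightarrow> carrier (sym_group n)" by (rule Gnm_carrier_Pi)
  show aut: "AutF0 n m g = centralizer (sym_group n) (phi g ` Fm0 m)"
    using g_Pi by (rule AutF0_eq_centralizer)
  have "centralizer (sym_group n) (phi g ` Fm0 m) \<subseteq> carrier (sym_group n)"
    by (auto simp: centralizer_def)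
  then show "{\<sigma> \<in> carrier (sym_group n). diag m \<sigma> \<in> Hx (Gnm n m) (Hdiag n m) g} = AutF0 n m g"
    using diag_inj [OF assms(2)] by (auto simp: Hx_Gnm [OF assms(2) g] aut)
next
  fix \<sigma> \<tau> assume \<sigma>: "\<sigma> \<in> carrier (Gnm n m)" and \<tau>: "\<tau> \<in> carrier (Gnm n m)"
  show "sim_rel (Gnm n m) (Hdiag n m) \<sigma> \<tau> \<longleftrightarrow> iso_F0 n m \<sigma> \<tau>"
    unfolding sim_rel_Gnm_iff [OF assms(2) \<sigma> \<tau>] iso_F0_iff [OF Gnm_carrier_Pi [OF \<sigma>] Gnm_carrier_Pi [OF \<tau>]] ..
qed

end
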